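(* Let $\mathbb{X},\mathbb{Y}$ be finite-dimensional Banach spaces with $\dim\mathbb{X}=n$, $\dim\mathbb{Y}=m$. Let $T\in\mathbb{L}(\mathbb{X},\mathbb{Y})$, $\|T\|=1$, be an operator of rank $1$ such that $T(M_T)=\{\lambda y:|\lambda|=1\}$ for some unit vector $y\in\mathbb{Y}$. If $\dim\operatorname{span}(M_T)=n$ and $y$ is $m$-smooth, then $T$ is an extreme contraction.
   Context: $M_T=\{x\in\mathbb{X}:\|x\|=1,\|Tx\|=\|T\|\}$. For a unit vector $z$ of a normed space $\mathbb{Z}$, $J(z)=\{f\in\mathbb{Z}^*:\|f\|=1,f(z)=1\}$, and $z$ is $k$-smooth if $\dim\operatorname{span}J(z)=k$. An operator $T$ is an extreme contraction if it is an extreme point of the closed unit ball of $\mathbb{L}(\mathbb{X},\mathbb{Y})$ (operator norm). *)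

theory Defs
  imports "HOL-Analysis.Analysis"
begin

definition norm_attain_set :: "('a::real_normed_vector \<Rightarrow>\<^sub>L 'b::real_normed_vector) \<Rightarrow> 'a set"
  where "norm_attain_set T = {x. norm x = 1 \<and> norm (blinfun_apply T x) = norm T}"

definition supp_funcs :: "'a::real_normed_vector \<Rightarrow> ('a \<Rightarrow>\<^sub>L real) set"
  where "supp_funcs z = {f. norm f = 1 \<and> blinfun_apply f z = 1}"

definition k_smooth :: "nat \<Rightarrow> 'a::real_normed_vector \<Rightarrow> bool"
  where "k_smooth k z \<longleftrightarrow> norm z = 1 \<and> dim (span (supp_funcs z)) = k"

definition fin_dim :: "'a::real_vector itself \<Rightarrow> bool"
  where "fin_dim _ \<longleftrightarrow> (\<exists>B::'a set. finite B \<and> span B = UNIV)"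

end

theory Submission imports Defs begin

text \<open>
  Let \<open>T = (1 - u) A + u B\<close> with \<open>\<parallel>A\<parallel>, \<parallel>B\<parallel> \<le> 1\<close> and \<open>0 < u < 1\<close>. For \<open>x \<in> M\<^sub>T\<close> we have
  \<open>T x = c y\<close> with \<open>\<bar>c\<bar> = 1\<close>, and each \<open>f \<in> J(y)\<close> takes values in \<open>[-1, 1]\<close> at \<open>A x\<close> and \<open>B x\<close>
  while \<open>f (T x) = c\<close> is an endpoint of that interval, so \<open>f (A x) = c\<close>. As \<open>y\<close> is
  \<open>m\<close>-smooth, \<open>J(y)\<close> is a family of functionals of full dimension, which cannot vanish at
  the nonzero vector \<open>A x - c y\<close>; hence \<open>A x = T x\<close>. Since \<open>M\<^sub>T\<close> spans the domain, \<open>A = T\<close>.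
\<close>

lemma extreme_point_ofI:
  assumes "x \<in> S"
    and "\<And>a b u. a \<in> S \<Longrightarrow> b \<in> S \<Longrightarrow> 0 < u \<Longrightarrow> u < 1 \<Longrightarrow>
           x = (1 - u) *\<^sub>R a + u *\<^sub>R b \<Longrightarrow> a = x"
  shows "x extreme_point_of S"
  unfolding extreme_point_of_def
proof (intro conjI ballI notI)
  show "x \<in> S" by fact
next
  fix a b assume a: "a \<in> S" and b: "b \<in> S" and "x \<in> open_segment a b"
  then obtain u where u: "0 < u" "u < 1" and x: "x = (1 - u) *\<^sub>R a + u *\<^sub>R b" and "a \<noteq> b"
    by (auto simp: in_segment)
  moreover have "a = x"
    using assms(2)[OF a b u x] .
  moreover have "b = x"
    using assms(2)[OF b a, of "1 - u"] u x by (simp add: add.commute)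
  ultimately show False by simp
qed

lemma convex_comb_eq_sign_real:
  fixes a b c u :: real
  assumes "\<bar>a\<bar> \<le> 1" "\<bar>b\<bar> \<le> 1" "\<bar>c\<bar> = 1" "0 < u" "u < 1"
    and "(1 - u) * a + u * b = c"
  shows "a = c"
proof -
  have cc: "c * c = 1"
    using assms(3) by (metis abs_mult_self_eq mult_1_right)
  have "c * a \<le> 1" "c * b \<le> 1"
    using assms(1-3) by (simp_all add: abs_le_iff abs_if split: if_splits)
  then have nonneg: "0 \<le> (1 - u) * (1 - c * a)" "0 \<le> u * (1 - c * b)"
    using assms(4,5) by simp_all
  have "(1 - u) * (1 - c * a) + u * (1 - c * b) = 1 - c * c"
    by (simp add: algebra_simps flip: assms(6))
  then have "(1 - u) * (1 - c * a) = 0"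
    using nonneg cc by linarith
  then have "c * a = 1"
    using assms(5) by simp
  then show "a = c"
    using cc by (metis mult.left_commute mult_1_right)
qed

lemma fin_dim_extend_basis:
  fixes S :: "'a::real_vector set"
  assumes "fin_dim TYPE('a)" and "independent S"
  obtains B where "S \<subseteq> B" "independent B" "span B = UNIV" "finite B" "card B = dim (UNIV :: 'a set)"
proof -
  obtain F :: "'a set" where F: "finite F" "span F = UNIV"
    using assms(1) unfolding fin_dim_def by blast
  obtain B where B: "S \<subseteq> B" "independent B" "UNIV \<subseteq> span B"
    by (rule maximal_independent_subset_extend[OF subset_UNIV assms(2)]) auto
  have "finite B"
    using independent_span_bound[OF F(1) B(2)] F(2) by auto
  moreover have "card B = dim (UNIV :: 'a set)"
    using dim_unique[of B UNIV "card B"] B by simp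
  ultimately show thesis
    using B by (intro that) auto
qed

lemma span_eq_UNIV_if_dim_eq:
  fixes M :: "'a::real_vector set"
  assumes "fin_dim TYPE('a)" and "dim M = dim (UNIV :: 'a set)"
  shows "span M = UNIV"
proof -
  obtain D where D: "D \<subseteq> M" "independent D" "card D = dim M"
    using basis_exists[of M] by metis
  obtain E where E: "D \<subseteq> E" "span E = UNIV" "finite E" "card E = dim (UNIV :: 'a set)"
    using fin_dim_extend_basis[OF assms(1) D(2)] by metis
  have "D = E"
    using card_subset_eq[OF E(3,1)] D(3) E(4) assms(2) by simp
  then show ?thesis
    using span_mono[OF D(1)] E(2) by auto
qed

lemma blinfun_eqI_span:
  fixes A B :: "'a::real_normed_vector \<Rightarrow>\<^sub>L 'b::real_normed_vector"
  assumes "span M = UNIV" and "\<And>x. x \<in> M \<Longrightarrow> blinfun_apply A x = blinfun_apply B x"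
  shows "A = B"
proof (rule blinfun_eqI)
  fix x
  have "x \<in> span M" using assms(1) by simp
  moreover have "linear (blinfun_apply C)" for C :: "'a \<Rightarrow>\<^sub>L 'b"
    by (rule bounded_linear.linear[OF blinfun.bounded_linear_right])
  ultimately show "blinfun_apply A x = blinfun_apply B x"
    using real_vector.linear_eq_on assms(2) by blast
qed

text \<open>
  With \<open>B\<close> a basis through \<open>v\<close>, the coordinate map
  \<open>g \<mapsto> \<Sum>b \<in> B - {v}. g b *\<^sub>R b\<close> embeds the functionals vanishing at \<open>v\<close> into a
  space of dimension one less than that of the whole space.
\<close>
lemma dim_functionals_vanishing_less:
  fixes S :: "('b::real_normed_vector \<Rightarrow>\<^sub>L real) set" and v :: 'b
  assumes "fin_dim TYPE('b)" and "v \<noteq> 0"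
    and vanish: "\<And>g. g \<in> S \<Longrightarrow> blinfun_apply g v = 0"
  shows "dim S < dim (UNIV :: 'b set)"
proof -
  obtain B where B: "{v} \<subseteq> B" "independent B" "span B = UNIV" "finite B"
      and card_B: "card B = dim (UNIV :: 'b set)"
  proof (rule fin_dim_extend_basis[OF assms(1)])
    show "independent {v}" using assms(2) by simp
  qed
  define B' where "B' = B - {v}"
  have B': "finite B'" "independent B'" "card B' = card B - 1"
    using B independent_mono[OF B(2), of "B - {v}"] unfolding B'_def
    by (auto simp: card_Diff_singleton)
  obtain C where C: "C \<subseteq> S" "independent C" "card C = dim S"
    using basis_exists[of S] by metis
  define \<phi> where "\<phi> g = (\<Sum>b\<in>B'. blinfun_apply g b *\<^sub>R b)" for g :: "'b \<Rightarrow>\<^sub>L real"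
  have lin: "linear \<phi>"
    unfolding \<phi>_def by (rule linearI)
      (simp_all add: scaleR_add_left sum.distrib scaleR_sum_right blinfun.add_left blinfun.scaleR_left)
  have inj: "inj_on \<phi> (span C)"
  proof (subst linear_inj_on_iff_eq_0[OF lin subspace_span], intro ballI impI)
    fix g assume g: "g \<in> span C" "\<phi> g = 0"
    have "blinfun_apply g v = 0"
      by (rule real_vector.linear_eq_0_on_span[OF bounded_linear.linear _ g(1)])
        (use C(1) vanish in \<open>auto intro: bounded_linear_apply_blinfun\<close>)
    moreover have "blinfun_apply g b = 0" if "b \<in> B'" for b
      using independentD[OF B'(2,1) subset_refl, of "blinfun_apply g"] g(2) that
      unfolding \<phi>_def by simp
    ultimately show "g = 0"
      using B(3) by (intro blinfun_eqI_span[of B]) (auto simp: B'_def)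
  qed
  have "independent (\<phi> ` C)"
    using real_vector.linear_independent_injective_image[OF lin C(2) inj] .
  moreover have "\<phi> ` C \<subseteq> span B'"
    unfolding \<phi>_def by (auto intro: span_sum span_mul span_base)
  ultimately have "card (\<phi> ` C) \<le> card B'"
    using independent_span_bound[OF B'(1)] by blast
  moreover have "card (\<phi> ` C) = card C"
    using inj span_superset by (intro card_image) (blast intro: inj_on_subset)
  moreover have "card B > 0"
    using B card_gt_0_iff by blast
  ultimately show ?thesis
    using C(3) B'(3) card_B by linarith
qed

lemma supp_funcs_apply_convex_comb:
  fixes a b y :: "'b::real_normed_vector"
  assumes "f \<in> supp_funcs y" "norm a \<le> 1" "norm b \<le> 1" "0 < u" "u < 1" "\<bar>c\<bar> = 1"
    and comb: "(1 - u) *\<^sub>R a + u *\<^sub>R b = c *\<^sub>R y"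
  shows "blinfun_apply f a = c"
proof -
  have f: "norm f = 1" "blinfun_apply f y = 1"
    using assms(1) unfolding supp_funcs_def by auto
  have bound: "\<bar>blinfun_apply f z\<bar> \<le> 1" if "norm z \<le> 1" for z
    using norm_blinfun[of f z] f(1) that by simp
  have "(1 - u) * blinfun_apply f a + u * blinfun_apply f b = c"
    using arg_cong[OF comb, of "blinfun_apply f"] f(2)
    by (simp add: blinfun.add_right blinfun.scaleR_right)
  then show ?thesis
    by (rule convex_comb_eq_sign_real[OF bound[OF assms(2)] bound[OF assms(3)] assms(6,4,5)])
qed

lemma convex_comb_eq_full_smooth_point:
  fixes a b y :: "'b::real_normed_vector"
  assumes "fin_dim TYPE('b)" and "dim (supp_funcs y) = dim (UNIV :: 'b set)"
    and "norm a \<le> 1" "norm b \<le> 1" "0 < u" "u < 1" "\<bar>c\<bar> = 1"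
    and "(1 - u) *\<^sub>R a + u *\<^sub>R b = c *\<^sub>R y"
  shows "a = c *\<^sub>R y"
proof (rule ccontr)
  assume "a \<noteq> c *\<^sub>R y"
  then have "a - c *\<^sub>R y \<noteq> 0" by simp
  moreover have "blinfun_apply f (a - c *\<^sub>R y) = 0" if "f \<in> supp_funcs y" for f
    using supp_funcs_apply_convex_comb[OF that assms(3-8)] that
    by (simp add: supp_funcs_def blinfun.diff_right blinfun.scaleR_right)
  ultimately have "dim (supp_funcs y) < dim (UNIV :: 'b set)"
    using dim_functionals_vanishing_less[OF assms(1)] by blast
  then show False
    using assms(2) by simp
qed

theorem mainTheorem5:
  fixes T :: "'a::banach \<Rightarrow>\<^sub>L 'b::banach" and y :: 'b and n m :: nat
  assumes "fin_dim TYPE('a)" and "fin_dim TYPE('b)"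
    and "dim (UNIV :: 'a set) = n" and "dim (UNIV :: 'b set) = m"
    and "norm T = 1"
    and "dim (range (blinfun_apply T)) = 1"
    and "norm y = 1"
    and "blinfun_apply T ` norm_attain_set T = {c *\<^sub>R y | c. \<bar>c\<bar> = 1}"
    and "dim (span (norm_attain_set T)) = n"
    and "k_smooth m y"
  shows "T extreme_point_of cball 0 1"
proof (rule extreme_point_ofI)
  show "T \<in> cball 0 1" using assms(5) by simp
next
  fix A B :: "'a \<Rightarrow>\<^sub>L 'b" and u :: real
  assume A: "A \<in> cball 0 1" and B: "B \<in> cball 0 1" and u: "0 < u" "u < 1"
    and T: "T = (1 - u) *\<^sub>R A + u *\<^sub>R B"
  have smooth: "dim (supp_funcs y) = dim (UNIV :: 'b set)"
    using assms(4,10) by (simp add: k_smooth_def)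
  have "blinfun_apply A x = blinfun_apply T x" if x: "x \<in> norm_attain_set T" for x
  proof -
    have "blinfun_apply T x \<in> blinfun_apply T ` norm_attain_set T"
      using x by (rule imageI)
    then obtain c where c: "blinfun_apply T x = c *\<^sub>R y" "\<bar>c\<bar> = 1"
      using assms(8) by auto
    have bound: "norm (blinfun_apply C x) \<le> 1" if "C \<in> cball 0 1" for C :: "'a \<Rightarrow>\<^sub>L 'b"
      using norm_blinfun[of C x] that x by (simp add: norm_attain_set_def)
    have "(1 - u) *\<^sub>R blinfun_apply A x + u *\<^sub>R blinfun_apply B x = c *\<^sub>R y"
      using c(1) by (simp add: T blinfun.add_left blinfun.scaleR_left)
    then show ?thesis
      using convex_comb_eq_full_smooth_point[OF assms(2) smooth bound[OF A] bound[OF B] u c(2)] c(1)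
      by simp
  qed
  moreover have "span (norm_attain_set T) = UNIV"
    using span_eq_UNIV_if_dim_eq[OF assms(1)] assms(3,9) by simp
  ultimately show "A = T"
    by (simp add: blinfun_eqI_span)
qed

end
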